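(* Let $P$ be a finite ranked poset with rank function $r$, let $P^*\subseteq P$ be a set of marked elements with $\min(P)\cup\max(P)\subseteq P^*$, and let $\lambda^r\colon P^*\to\mathbb{Z}$ be given by $\lambda^r(a)=r(a)$. Let $\mathbf{r}\in\mathbb{R}^{P\setminus P^*}$ be the point with coordinates $r_p=r(p)$. Then $\mathbf{r}$ is the unique interior lattice point of the marked order polytope $\mathcal{O}(P,\lambda^r)$, regarded as a subset of $\mathbb{R}^{P\setminus P^*}$.
   Context: A rank function on a poset $P$ is a map $r\colon P\to\mathbb{Z}$ with $r(p)=r(q)-1$ for every covering relation $p\prec q$; $P$ is ranked if it has one. The marked order polytope $\mathcal{O}(P,\lambda)$, for an order-preserving $\lambda\colon P^*\to\mathbb{R}$, is the set of $\mathbf{x}\in\mathbb{R}^P$ with $x_a=\lambda(a)$ for $a\in P^*$ and $x_p\le x_q$ for every covering relation $p\prec q$ in $P$; it is regarded as a subset of $\mathbb{R}^{P\setminus P^*}$ via projection onto the unmarked coordinates, and "interior" refers to the interior in $\mathbb{R}^{P\setminus P^*}$. A lattice point is a point of $\mathbb{Z}^{P\setminus P^*}$. *)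

theory Defs
  imports "HOL-Analysis.Analysis"
begin

definition covers :: "'a set \<Rightarrow> ('a \<times> 'a) set \<Rightarrow> 'a \<Rightarrow> 'a \<Rightarrow> bool" where
  "covers P R p q \<longleftrightarrow> p \<in> P \<and> q \<in> P \<and> (p, q) \<in> R \<and> p \<noteq> q \<and>
     \<not> (\<exists>z\<in>P. z \<noteq> p \<and> z \<noteq> q \<and> (p, z) \<in> R \<and> (z, q) \<in> R)"

definition is_rank_function :: "'a set \<Rightarrow> ('a \<times> 'a) set \<Rightarrow> ('a \<Rightarrow> int) \<Rightarrow> bool" where
  "is_rank_function P R r \<longleftrightarrow> (\<forall>p q. covers P R p q \<longrightarrow> r p = r q - 1)"

definition minimal_elems :: "'a set \<Rightarrow> ('a \<times> 'a) set \<Rightarrow> 'a set" where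
  "minimal_elems P R = {p \<in> P. \<not> (\<exists>q\<in>P. q \<noteq> p \<and> (q, p) \<in> R)}"

definition maximal_elems :: "'a set \<Rightarrow> ('a \<times> 'a) set \<Rightarrow> 'a set" where
  "maximal_elems P R = {p \<in> P. \<not> (\<exists>q\<in>P. q \<noteq> p \<and> (p, q) \<in> R)}"

text \<open>The space R^(P - P*) is represented as the linear subspace of 'a \<Rightarrow> real
  of functions vanishing outside P - P*.\<close>

definition coord_space :: "'a set \<Rightarrow> ('a \<Rightarrow> real) set" where
  "coord_space U = {x. \<forall>a. a \<notin> U \<longrightarrow> x a = 0}"

definition marked_order_polytope ::
  "'a set \<Rightarrow> ('a \<times> 'a) set \<Rightarrow> 'a set \<Rightarrow> ('a \<Rightarrow> real) \<Rightarrow> ('a \<Rightarrow> real) set" where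
  "marked_order_polytope P R Pstar lam =
     {x \<in> coord_space (P - Pstar).
        \<forall>p q. covers P R p q \<longrightarrow>
          (if p \<in> Pstar then lam p else x p) \<le> (if q \<in> Pstar then lam q else x q)}"

definition interior_in_coords :: "'a set \<Rightarrow> ('a \<Rightarrow> real) set \<Rightarrow> ('a \<Rightarrow> real) set" where
  "interior_in_coords U K = (subtopology euclidean (coord_space U)) interior_of K"

definition lattice_points :: "'a set \<Rightarrow> ('a \<Rightarrow> real) set" where
  "lattice_points U = {x \<in> coord_space U. \<forall>a\<in>U. x a \<in> \<int>}"

end

(* The rank point lies in the interior: every covering inequality has slack r q - r p = 1
   there, so moving each free coordinate by less than 1/2 stays inside the polytope.
   Conversely, at an interior point x every covering inequality involving a free coordinate
   is strict, for otherwise a small shift of that coordinate leaves the polytope. If x is also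
   integral, its extension x' by the marking increases by at least 1 along every cover, so
   x' - r is weakly increasing along covers. Every element of a finite poset lies above a
   minimal and below a maximal element, where x' - r vanishes; hence x' = r. *)
theory Submission
  imports Defs
begin

lemma maximal_elems_eq_minimal_elems_converse: "maximal_elems P R = minimal_elems P (R\<inverse>)"
  unfolding minimal_elems_def maximal_elems_def by auto

lemma mono_if_mono_on_covers:
  fixes g :: "'a \<Rightarrow> 'b::preorder"
  assumes fin: "finite P" and po: "partial_order_on P R"
    and mono: "\<And>p q. covers P R p q \<Longrightarrow> g p \<le> g q"
    and "(p, q) \<in> R"
  shows "g p \<le> g q"
  using \<open>(p, q) \<in> R\<close>
proof (induction "card {w\<in>P. (p, w) \<in> R \<and> (w, q) \<in> R}" arbitrary: p q rule: less_induct)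
  case less
  have refl: "refl_on P R" and trans: "trans R" and antisym: "antisym R" and "R \<subseteq> P \<times> P"
    using partial_order_onD[OF po] by auto
  then have "p \<in> P" "q \<in> P"
    using less.prems by auto
  then consider "p = q" | "covers P R p q"
    | z where "z \<in> P" "z \<noteq> p" "z \<noteq> q" "(p, z) \<in> R" "(z, q) \<in> R"
    using less.prems unfolding covers_def by blast
  then show ?case
  proof cases
    case 3
    let ?I = "\<lambda>a b. {w\<in>P. (a, w) \<in> R \<and> (w, b) \<in> R}"
    have "?I p z \<subset> ?I p q" "?I z q \<subset> ?I p q"
      using 3 less.prems \<open>p \<in> P\<close> \<open>q \<in> P\<close> refl trans antisym
      unfolding refl_on_def trans_def antisym_def by blast+
    then have "card (?I p z) < card (?I p q)" "card (?I z q) < card (?I p q)"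
      using fin by (simp_all add: psubset_card_mono)
    then have "g p \<le> g z" "g z \<le> g q"
      using less.hyps 3 by blast+
    then show ?thesis
      by (rule order_trans)
  qed (use mono in auto)
qed

lemma exists_minimal_elem_below:
  assumes fin: "finite P" and po: "partial_order_on P R" and "p \<in> P"
  shows "\<exists>m\<in>minimal_elems P R. (m, p) \<in> R"
proof -
  have refl: "refl_on P R" and trans: "trans R" and "R \<subseteq> P \<times> P"
    using partial_order_onD[OF po] by auto
  then have "finite R"
    using fin finite_subset by blast
  then have wf: "wf (R - Id)"
    using partial_order_on_well_order_on po by blast
  have "p \<in> {w\<in>P. (w, p) \<in> R}"
    using \<open>p \<in> P\<close> refl unfolding refl_on_def by blast
  then obtain m where m: "m \<in> {w\<in>P. (w, p) \<in> R}"
    and least: "\<And>y. (y, m) \<in> R - Id \<Longrightarrow> y \<notin> {w\<in>P. (w, p) \<in> R}"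
    by (rule wfE_min[OF wf]) blast
  have "m \<in> minimal_elems P R"
    unfolding minimal_elems_def
  proof (intro CollectI conjI notI)
    show "m \<in> P"
      using m by simp
    assume "\<exists>q\<in>P. q \<noteq> m \<and> (q, m) \<in> R"
    then obtain q where "q \<in> P" "q \<noteq> m" "(q, m) \<in> R"
      by blast
    moreover have "(q, p) \<in> R"
      using trans \<open>(q, m) \<in> R\<close> m unfolding trans_def by blast
    ultimately show False
      using least[of q] by blast
  qed
  then show ?thesis
    using m by blast
qed

lemma const_if_mono_on_covers_const_on_extremal:
  fixes g :: "'a \<Rightarrow> 'b::order"
  assumes fin: "finite P" and po: "partial_order_on P R"
    and mono: "\<And>p q. covers P R p q \<Longrightarrow> g p \<le> g q"
    and extremal: "\<And>a. a \<in> minimal_elems P R \<union> maximal_elems P R \<Longrightarrow> g a = c"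
    and "p \<in> P"
  shows "g p = c"
proof -
  obtain m where "m \<in> minimal_elems P R" "(m, p) \<in> R"
    using exists_minimal_elem_below[OF fin po \<open>p \<in> P\<close>] by blast
  then have "c \<le> g p"
    using mono_if_mono_on_covers[OF fin po mono] extremal by fastforce
  obtain M where "M \<in> maximal_elems P R" "(p, M) \<in> R"
    using exists_minimal_elem_below[of P "R\<inverse>"] fin po \<open>p \<in> P\<close>
    by (auto simp: maximal_elems_eq_minimal_elems_converse)
  then have "g p \<le> c"
    using mono_if_mono_on_covers[OF fin po mono] extremal by fastforce
  with \<open>c \<le> g p\<close> show ?thesis
    by simp
qed

lemma open_contains_coordinate_perturbations:
  fixes W :: "('a \<Rightarrow> real) set"
  assumes "open W" "x \<in> W"
  obtains e where "e > 0" "\<And>d. \<bar>d\<bar> < e \<Longrightarrow> x(a := x a + d) \<in> W"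
proof -
  have "continuous_on UNIV (\<lambda>d::real. x(a := x a + d))"
  proof (rule continuous_on_coordinatewise_then_product)
    show "continuous_on UNIV (\<lambda>d::real. (x(a := x a + d)) i)" for i
      by (cases "i = a") (auto intro!: continuous_intros)
  qed
  then have "open ((\<lambda>d::real. x(a := x a + d)) -` W)"
    using open_vimage[OF \<open>open W\<close>] by blast
  moreover have "0 \<in> (\<lambda>d::real. x(a := x a + d)) -` W"
    using \<open>x \<in> W\<close> by simp
  ultimately obtain e where "e > 0" "ball 0 e \<subseteq> (\<lambda>d::real. x(a := x a + d)) -` W"
    using openE by blast
  then show ?thesis
    using that by (auto simp: dist_real_def subset_iff)
qed

lemma Ints_less_imp_add_one_le:
  fixes a b :: "'a::linordered_idom"
  assumes "a \<in> \<int>" "b \<in> \<int>" "a < b"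
  shows "a + 1 \<le> b"
proof -
  obtain m n where "a = of_int m" "b = of_int n"
    using assms(1,2) by (elim Ints_cases)
  with assms(3) have "m + 1 \<le> n"
    by simp
  then show ?thesis
    using \<open>a = of_int m\<close> \<open>b = of_int n\<close> by (metis of_int_1 of_int_add of_int_le_iff)
qed

definition extend_marked :: "'a set \<Rightarrow> ('a \<Rightarrow> real) \<Rightarrow> ('a \<Rightarrow> real) \<Rightarrow> 'a \<Rightarrow> real" where
  "extend_marked Pstar lam x a = (if a \<in> Pstar then lam a else x a)"

lemma mem_marked_order_polytope:
  "x \<in> marked_order_polytope P R Pstar lam \<longleftrightarrow> x \<in> coord_space (P - Pstar) \<and>
     (\<forall>p q. covers P R p q \<longrightarrow> extend_marked Pstar lam x p \<le> extend_marked Pstar lam x q)"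
  unfolding marked_order_polytope_def extend_marked_def by blast

lemma interior_marked_order_polytope_strict:
  assumes x: "x \<in> interior_in_coords (P - Pstar) (marked_order_polytope P R Pstar lam)"
    and pq: "covers P R p q" and unmarked: "p \<notin> Pstar \<or> q \<notin> Pstar"
  shows "extend_marked Pstar lam x p < extend_marked Pstar lam x q"
proof -
  let ?S = "coord_space (P - Pstar)" and ?K = "marked_order_polytope P R Pstar lam"
  obtain W where W: "open W" "x \<in> W \<inter> ?S" "W \<inter> ?S \<subseteq> ?K"
    using x unfolding interior_in_coords_def interior_of_def openin_subtopology by auto
  have shift: "\<exists>e>0. x(a := x a + e) \<in> ?K \<and> x(a := x a - e) \<in> ?K" if "a \<in> P - Pstar" for a
  proof -
    obtain e where "e > 0" "\<And>d. \<bar>d\<bar> < e \<Longrightarrow> x(a := x a + d) \<in> W"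
      using open_contains_coordinate_perturbations[OF W(1)] W(2) by blast
    moreover have "x(a := x a + d) \<in> ?S" for d
      using W(2) that unfolding coord_space_def by auto
    ultimately have "x(a := x a + d) \<in> ?K" if "\<bar>d\<bar> < e" for d
      using W(3) that by blast
    from this[of "e/2"] this[of "- (e/2)"] \<open>e > 0\<close> show ?thesis
      by (intro exI[of _ "e/2"]) auto
  qed
  have "p \<in> P" "q \<in> P" "p \<noteq> q"
    using pq unfolding covers_def by auto
  have cover_le: "extend_marked Pstar lam y p \<le> extend_marked Pstar lam y q" if "y \<in> ?K" for y
    using that pq unfolding mem_marked_order_polytope by blast
  from unmarked show ?thesis
  proof
    assume "p \<notin> Pstar"
    then obtain e where "e > 0" "x(p := x p + e) \<in> ?K"
      using shift \<open>p \<in> P\<close> by blast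
    with cover_le \<open>p \<notin> Pstar\<close> \<open>p \<noteq> q\<close> show ?thesis
      unfolding extend_marked_def by fastforce
  next
    assume "q \<notin> Pstar"
    then obtain e where "e > 0" "x(q := x q - e) \<in> ?K"
      using shift \<open>q \<in> P\<close> by blast
    with cover_le \<open>q \<notin> Pstar\<close> \<open>p \<noteq> q\<close> show ?thesis
      unfolding extend_marked_def by fastforce
  qed
qed

lemma interior_marked_order_polytope_if_slack:
  assumes fin: "finite (P - Pstar)"
    and x: "x \<in> marked_order_polytope P R Pstar lam" and "\<delta> > 0"
    and slack: "\<And>p q. covers P R p q \<Longrightarrow> p \<notin> Pstar \<or> q \<notin> Pstar \<Longrightarrow>
                  extend_marked Pstar lam x p + \<delta> \<le> extend_marked Pstar lam x q"
  shows "x \<in> interior_in_coords (P - Pstar) (marked_order_polytope P R Pstar lam)"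
proof -
  let ?S = "coord_space (P - Pstar)" and ?K = "marked_order_polytope P R Pstar lam"
  define V where "V = (\<Inter>a\<in>P - Pstar. {y. \<bar>y a - x a\<bar> < \<delta>/2})"
  have "open {y::'a \<Rightarrow> real. \<bar>y a - x a\<bar> < \<delta>/2}" for a
    by (intro open_Collect_less continuous_intros continuous_on_product_coordinates)
  then have "open V"
    unfolding V_def using fin by blast
  have "V \<inter> ?S \<subseteq> ?K"
  proof
    fix y assume y: "y \<in> V \<inter> ?S"
    have close: "\<bar>extend_marked Pstar lam y a - extend_marked Pstar lam x a\<bar> < \<delta>/2"
      if "a \<in> P" for a
      using y that \<open>\<delta> > 0\<close> unfolding V_def extend_marked_def by auto
    show "y \<in> ?K"
      unfolding mem_marked_order_polytope
    proof (intro conjI allI impI)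
      fix p q assume pq: "covers P R p q"
      then have "p \<in> P" "q \<in> P"
        unfolding covers_def by auto
      show "extend_marked Pstar lam y p \<le> extend_marked Pstar lam y q"
      proof (cases "p \<notin> Pstar \<or> q \<notin> Pstar")
        case True
        then show ?thesis
          using slack[OF pq True] close[OF \<open>p \<in> P\<close>] close[OF \<open>q \<in> P\<close>] by linarith
      next
        case False
        then have "extend_marked Pstar lam y p = extend_marked Pstar lam x p"
          "extend_marked Pstar lam y q = extend_marked Pstar lam x q"
          unfolding extend_marked_def by auto
        then show ?thesis
          using x pq unfolding mem_marked_order_polytope by auto
      qed
    qed (use y in blast)
  qed
  moreover have "openin (subtopology euclidean ?S) (V \<inter> ?S)"
    using \<open>open V\<close> by (auto simp: openin_subtopology)
  moreover have "x \<in> V \<inter> ?S"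
    using x \<open>\<delta> > 0\<close> unfolding V_def mem_marked_order_polytope by auto
  ultimately show ?thesis
    unfolding interior_in_coords_def using interior_of_maximal by blast
qed

lemma rank_point_mem_interior:
  assumes "finite P" and rank: "is_rank_function P R r"
  shows "(\<lambda>a. if a \<in> P - Pstar then real_of_int (r a) else 0)
           \<in> interior_in_coords (P - Pstar)
                (marked_order_polytope P R Pstar (\<lambda>a. real_of_int (r a)))"
proof (rule interior_marked_order_polytope_if_slack[where \<delta> = 1])
  let ?r = "extend_marked Pstar (\<lambda>a. real_of_int (r a))
             (\<lambda>a. if a \<in> P - Pstar then real_of_int (r a) else 0)"
  have "?r a = r a" if "a \<in> P" for a
    using that unfolding extend_marked_def by simp
  moreover have "p \<in> P \<and> q \<in> P \<and> r p = r q - 1" if "covers P R p q" for p q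
    using that rank unfolding is_rank_function_def covers_def by blast
  ultimately show step: "?r p + 1 \<le> ?r q" if "covers P R p q" for p q
    using that by force
  have "?r p \<le> ?r q" if "covers P R p q" for p q
    using step[OF that] by linarith
  then show "(\<lambda>a. if a \<in> P - Pstar then real_of_int (r a) else 0)
      \<in> marked_order_polytope P R Pstar (\<lambda>a. real_of_int (r a))"
    unfolding mem_marked_order_polytope coord_space_def by simp
qed (use assms(1) in simp_all)

lemma interior_lattice_point_eq_rank_point:
  assumes fin: "finite P" and po: "partial_order_on P R" and rank: "is_rank_function P R r"
    and extremal_marked: "minimal_elems P R \<union> maximal_elems P R \<subseteq> Pstar"
    and x_interior: "x \<in> interior_in_coords (P - Pstar)
                           (marked_order_polytope P R Pstar (\<lambda>a. real_of_int (r a)))"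
    and x_lattice: "x \<in> lattice_points (P - Pstar)"
  shows "x = (\<lambda>a. if a \<in> P - Pstar then real_of_int (r a) else 0)"
proof -
  let ?x = "extend_marked Pstar (\<lambda>a. real_of_int (r a)) x"
  have rank_step: "r p + 1 = r q" if "covers P R p q" for p q
    using that rank unfolding is_rank_function_def by simp
  have strict: "?x p < ?x q" if pq: "covers P R p q" for p q
  proof (cases "p \<notin> Pstar \<or> q \<notin> Pstar")
    case True
    then show ?thesis
      using interior_marked_order_polytope_strict[OF x_interior pq] by blast
  next
    case False
    then show ?thesis
      using rank_step[OF pq] unfolding extend_marked_def by simp
  qed
  have x_coord: "x \<in> coord_space (P - Pstar)"
    using x_lattice unfolding lattice_points_def by blast
  have integral: "?x a \<in> \<int>" for a
    using x_lattice x_coord unfolding lattice_points_def coord_space_def extend_marked_def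
    by (cases "a \<in> P") auto
  have mono: "?x p - r p \<le> ?x q - r q" if "covers P R p q" for p q
  proof -
    have "?x p + 1 \<le> ?x q"
      using Ints_less_imp_add_one_le[OF integral integral strict[OF that]] .
    moreover have "real_of_int (r p) + 1 = real_of_int (r q)"
      using rank_step[OF that] by (metis of_int_1 of_int_add)
    ultimately show ?thesis
      by linarith
  qed
  have extremal_zero: "?x a - r a = 0" if "a \<in> minimal_elems P R \<union> maximal_elems P R" for a
    using that extremal_marked unfolding extend_marked_def by auto
  have on_P: "?x a - r a = 0" if "a \<in> P" for a
    using const_if_mono_on_covers_const_on_extremal[OF fin po mono extremal_zero that] .
  show ?thesis
  proof
    fix a
    show "x a = (if a \<in> P - Pstar then real_of_int (r a) else 0)"
    proof (cases "a \<in> P - Pstar")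
      case True
      then show ?thesis
        using on_P[of a] unfolding extend_marked_def by simp
    next
      case False
      have "x a = 0"
        using x_coord False unfolding coord_space_def by blast
      then show ?thesis
        by (simp only: if_not_P[OF False])
    qed
  qed
qed

theorem proposition3p1:
  fixes P Pstar :: "'a set" and R :: "('a \<times> 'a) set" and r :: "'a \<Rightarrow> int"
  assumes "finite P"
    and "partial_order_on P R"
    and "is_rank_function P R r"
    and "Pstar \<subseteq> P"
    and "minimal_elems P R \<union> maximal_elems P R \<subseteq> Pstar"
  shows "interior_in_coords (P - Pstar)
           (marked_order_polytope P R Pstar (\<lambda>a. real_of_int (r a)))
         \<inter> lattice_points (P - Pstar)
         = {(\<lambda>a. if a \<in> P - Pstar then real_of_int (r a) else 0)}"
proof (intro equalityI subsetI)
  let ?rank = "\<lambda>a. if a \<in> P - Pstar then real_of_int (r a) else 0"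
  fix x
  assume "x \<in> interior_in_coords (P - Pstar)
           (marked_order_polytope P R Pstar (\<lambda>a. real_of_int (r a))) \<inter> lattice_points (P - Pstar)"
  then have "x = ?rank"
    by (elim IntE) (rule interior_lattice_point_eq_rank_point[OF assms(1-3,5)])
  then show "x \<in> {?rank}"
    by (simp only: singleton_iff)
next
  let ?rank = "\<lambda>a. if a \<in> P - Pstar then real_of_int (r a) else 0"
  fix x
  assume "x \<in> {?rank}"
  moreover have "?rank \<in> lattice_points (P - Pstar)"
    unfolding lattice_points_def coord_space_def by auto
  ultimately show "x \<in> interior_in_coords (P - Pstar)
           (marked_order_polytope P R Pstar (\<lambda>a. real_of_int (r a))) \<inter> lattice_points (P - Pstar)"
    using rank_point_mem_interior[OF assms(1,3)] by (simp only: singleton_iff IntI)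
qed

end
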